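(* Let $m,n$ be positive integers and for each $1\le i\le 2m$ let $\mathbf{x}^{(i)}=(\mathbf{x}^{(i)}_1,\dots,\mathbf{x}^{(i)}_n)$ be complex numbers in the open unit disc (or formal variables, the identity holding as formal power series). Then $$\sum_{\lambda:\ \ell(\lambda)\le n}s_\lambda(\mathbf{x}^{(1)})\cdots s_\lambda(\mathbf{x}^{(2m)})=\prod_{i=1}^{2m}\frac{1}{V(\mathbf{x}^{(i)})}\cdot\mathrm{Det}^{[2m]}\left(\frac{1}{1-\mathbf{x}^{(1)}_{i_1}\cdots\mathbf{x}^{(2m)}_{i_{2m}}}\right)_{1\le i_1,\dots,i_{2m}\le n}.$$
   Context: $V(\mathbf{x})=\prod_{1\le i<j\le n}(\mathbf{x}_i-\mathbf{x}_j)$; $s_\lambda(\mathbf{x})=\det(\mathbf{x}_i^{\lambda_j+n-j})_{1\le i,j\le n}/V(\mathbf{x})$ is the Schur polynomial in $n$ variables, the sum being over all partitions with at most $n$ parts. Hyperdeterminant: $\mathrm{Det}^{[2m]}(A):=\frac{1}{n!}\sum_{\sigma_1,\dots,\sigma_{2m}\in\mathfrak{S}_n}\mathrm{sgn}(\sigma_1)\cdots\mathrm{sgn}(\sigma_{2m})\prod_{i=1}^nA(\sigma_1(i),\dots,\sigma_{2m}(i))$. *)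

theory Defs
  imports "HOL-Analysis.Analysis" "Jordan_Normal_Form.Determinant"
begin

definition partitions_le :: "nat \<Rightarrow> (nat \<Rightarrow> nat) set" where
  "partitions_le n = {lam. (\<forall>i j. i \<le> j \<longrightarrow> lam j \<le> lam i) \<and> (\<forall>j\<ge>n. lam j = 0)}"

definition vandermonde :: "nat \<Rightarrow> (nat \<Rightarrow> complex) \<Rightarrow> complex" where
  "vandermonde n y = (\<Prod>j<n. \<Prod>i<j. (y i - y j))"

definition schur :: "nat \<Rightarrow> (nat \<Rightarrow> complex) \<Rightarrow> (nat \<Rightarrow> nat) \<Rightarrow> complex" where
  "schur n y lam =
     Determinant.det (mat n n (\<lambda>(i, j). y i ^ (lam j + (n - 1 - j)))) / vandermonde n y"

text \<open>Hyperdeterminant of order r of an n x ... x n array A, where A is applied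
  to an index tuple given as a function k \<mapsto> i_k (k < r).\<close>
definition hyperdet :: "nat \<Rightarrow> nat \<Rightarrow> ((nat \<Rightarrow> nat) \<Rightarrow> complex) \<Rightarrow> complex" where
  "hyperdet r n A = (1 / of_nat (fact n)) *
     (\<Sum>\<sigma> \<in> Pi\<^sub>E {..<r} (\<lambda>_. {p. p permutes {..<n}}).
        (\<Prod>k<r. of_int (sign (\<sigma> k))) * (\<Prod>i<n. A (\<lambda>k. \<sigma> k i)))"

end

theory Submission
  imports Defs
begin

(*
  Write a_\<mu>(y) = det (y_i ^ \<mu>_j) for the alternant of an exponent tuple \<mu>, so that
  s_\<lambda> = a_(\<lambda>+\<delta>) / V with \<delta> = (n-1, ..., 1, 0). Expanding each of the 2m alternants by
  Leibniz and summing the geometric series over all \<mu> \<in> \<nat>^n gives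
    \<Sum>_\<mu> a_\<mu>(x^(1)) ... a_\<mu>(x^(2m)) = n! Det^[2m] (1 / (1 - x^(1)_i1 ... x^(2m)_i2m)).
  The summand vanishes unless the entries of \<mu> are distinct, and since the number of factors is
  even it is invariant under permuting \<mu>. Hence the sum over \<nat>^n is n! times the sum over
  strictly decreasing \<mu>, and these are exactly the \<lambda> + \<delta> with at most n parts.
*)

section \<open>Geometric series\<close>

lemma has_sum_sum:
  fixes f :: "'i \<Rightarrow> 'a \<Rightarrow> 'b::topological_comm_monoid_add"
  assumes "finite I" and "\<And>i. i \<in> I \<Longrightarrow> (f i has_sum s i) A"
  shows "((\<lambda>x. \<Sum>i\<in>I. f i x) has_sum (\<Sum>i\<in>I. s i)) A"
  using assms by (induction I rule: finite_induct) (auto intro!: has_sum_add)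

lemma has_sum_geometric:
  fixes z :: "'a::{real_normed_field,banach}"
  assumes "norm z < 1"
  shows "((\<lambda>t. z ^ t) has_sum (1 / (1 - z))) UNIV"
  using geometric_sums[OF assms] assms
  by (intro norm_summable_imp_has_sum) (auto simp: norm_power intro!: summable_geometric)

lemma abs_summable_on_geometric:
  fixes z :: "'a::{real_normed_field,banach}"
  assumes "norm z < 1"
  shows "(\<lambda>t. z ^ t) abs_summable_on UNIV"
  using has_sum_geometric[of "norm z"] assms by (auto simp: norm_power summable_on_def)

lemma has_sum_prod_geometric_PiE:
  fixes z :: "'b \<Rightarrow> 'a::{real_normed_field,banach}"
  assumes "finite A" and "\<And>j. j \<in> A \<Longrightarrow> norm (z j) < 1"
  shows "((\<lambda>\<mu>. \<Prod>j\<in>A. z j ^ \<mu> j) has_sum (\<Prod>j\<in>A. 1 / (1 - z j))) (PiE A (\<lambda>_. UNIV))"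
proof -
  have norm_lt: "norm (norm (z j)) < 1" if "j \<in> A" for j
    using assms(2)[OF that] by simp
  have "infsum (\<lambda>\<mu>. \<Prod>j\<in>A. norm (z j) ^ \<mu> j) (PiE A (\<lambda>_. UNIV)) =
      (\<Prod>j\<in>A. infsum (\<lambda>t. norm (z j) ^ t) UNIV)"
    by (rule infsum_prod_PiE_abs[OF assms(1) abs_summable_on_geometric[OF norm_lt]])
  also have "\<dots> = (\<Prod>j\<in>A. 1 / (1 - norm (z j)))"
    by (intro prod.cong refl infsumI has_sum_geometric norm_lt)
  also have "\<dots> \<noteq> 0"
    using assms by (force simp: prod_zero_iff)
  \<comment> \<open>a nonzero \<open>infsum\<close> forces summability, since \<open>infsum\<close> is 0 otherwise\<close>
  finally have "(\<lambda>\<mu>. \<Prod>j\<in>A. norm (z j) ^ \<mu> j) summable_on PiE A (\<lambda>_. UNIV)"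
    using infsum_not_exists by blast
  then have summable: "(\<lambda>\<mu>. \<Prod>j\<in>A. z j ^ \<mu> j) summable_on PiE A (\<lambda>_. UNIV)"
    using abs_summable_summable[of "\<lambda>\<mu>. \<Prod>j\<in>A. z j ^ \<mu> j"]
    by (simp add: prod_norm[symmetric] norm_power)
  have "infsum (\<lambda>\<mu>. \<Prod>j\<in>A. z j ^ \<mu> j) (PiE A (\<lambda>_. UNIV)) =
      (\<Prod>j\<in>A. infsum (\<lambda>t. z j ^ t) UNIV)"
    by (rule infsum_prod_PiE_abs[OF assms(1) abs_summable_on_geometric[OF assms(2)]])
  also have "\<dots> = (\<Prod>j\<in>A. 1 / (1 - z j))"
    by (intro prod.cong refl infsumI has_sum_geometric assms(2))
  finally show ?thesis
    using has_sum_infsum[OF summable] by simp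
qed

lemma norm_prod_less_one:
  fixes a :: "'b \<Rightarrow> 'a::real_normed_field"
  assumes "finite A" and "A \<noteq> {}" and "\<And>k. k \<in> A \<Longrightarrow> norm (a k) < 1"
  shows "norm (\<Prod>k\<in>A. a k) < 1"
  using assms
proof (induction A rule: finite_ne_induct)
  case (insert k A)
  then have "norm (a k) * norm (\<Prod>k\<in>A. a k) < 1 * 1"
    by (intro mult_strict_mono') auto
  with insert show ?case
    by (simp add: norm_mult)
qed simp

section \<open>Alternants\<close>

definition alternant :: "nat \<Rightarrow> (nat \<Rightarrow> 'a::comm_ring_1) \<Rightarrow> (nat \<Rightarrow> nat) \<Rightarrow> 'a" where
  "alternant n y \<mu> = (\<Sum>p | p permutes {..<n}. of_int (sign p) * (\<Prod>i<n. y (p i) ^ \<mu> i))"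

lemma det_power_mat_eq_alternant:
  "Determinant.det (mat n n (\<lambda>(i, j). y i ^ \<mu> j)) = alternant n y \<mu>"
proof -
  let ?A = "mat n n (\<lambda>(i, j). y i ^ \<mu> j)"
  have "Determinant.det ?A = Determinant.det (transpose_mat ?A)"
    by (simp add: det_transpose[of ?A n])
  also have "\<dots> = (\<Sum>p | p permutes {0..<n}. signof p * (\<Prod>i=0..<n. transpose_mat ?A $$ (i, p i)))"
    by (rule det_def') simp
  also have "\<dots> = alternant n y \<mu>"
    unfolding alternant_def atLeast0LessThan
  proof (intro sum.cong refl arg_cong2[where f = "(*)"] prod.cong)
    fix p i assume "p \<in> {p. p permutes {..<n}}" and "i \<in> {..<n}"
    then show "transpose_mat ?A $$ (i, p i) = y (p i) ^ \<mu> i"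
      using permutes_in_image[of p "{..<n}" i] by simp
  qed
  finally show ?thesis .
qed

lemma alternant_cong:
  "(\<And>i. i < n \<Longrightarrow> \<mu> i = \<mu>' i) \<Longrightarrow> alternant n y \<mu> = alternant n y \<mu>'"
  unfolding alternant_def by (intro sum.cong refl arg_cong2[where f = "(*)"] prod.cong) auto

lemma alternant_permute:
  assumes \<tau>: "\<tau> permutes {..<n}"
  shows "alternant n y (\<mu> \<circ> \<tau>) = of_int (sign \<tau>) * alternant n y \<mu>"
proof -
  define H where "H p = (\<Prod>i<n. y (p i) ^ \<mu> i)" for p
  let ?\<tau>' = "Hilbert_Choice.inv \<tau>"
  have H_comp: "H (p \<circ> ?\<tau>') = (\<Prod>i<n. y (p i) ^ (\<mu> \<circ> \<tau>) i)" for p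
  proof -
    have "H (p \<circ> ?\<tau>') = (\<Prod>i<n. y (p (?\<tau>' (\<tau> i))) ^ \<mu> (\<tau> i))"
      unfolding H_def by (subst prod.permute[OF \<tau>]) simp
    then show ?thesis
      using permutes_inverses(2)[OF \<tau>] by simp
  qed
  have sign_comp: "sign (p \<circ> ?\<tau>') = sign \<tau> * sign p" if "p permutes {..<n}" for p
  proof -
    have "permutation p" and "permutation \<tau>"
      using that \<tau> by (auto intro: permutes_imp_permutation)
    then show ?thesis
      by (simp add: sign_compose permutation_inverse sign_inverse)
  qed
  have "alternant n y \<mu> = (\<Sum>p | p permutes {..<n}. of_int (sign (p \<circ> ?\<tau>')) * H (p \<circ> ?\<tau>'))"
    unfolding alternant_def H_def[symmetric]
    by (rule sum_permutations_compose_right[OF permutes_inv[OF \<tau>]])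
  also have "\<dots> = of_int (sign \<tau>) * alternant n y (\<mu> \<circ> \<tau>)"
    unfolding alternant_def H_comp sum_distrib_left by (intro sum.cong) (auto simp: sign_comp)
  finally show ?thesis
    by (auto simp: sign_def)
qed

lemma alternant_eq_0_if_not_inj:
  fixes y :: "nat \<Rightarrow> 'a::{idom,ring_char_0}"
  assumes "\<not> inj_on \<mu> {..<n}"
  shows "alternant n y \<mu> = 0"
proof -
  obtain a b where "a < n" "b < n" "a \<noteq> b" "\<mu> a = \<mu> b"
    using assms unfolding inj_on_def by auto
  then have "Transposition.transpose a b permutes {..<n}" and "\<mu> \<circ> Transposition.transpose a b = \<mu>"
    by (auto intro!: permutes_swap_id simp: fun_eq_iff Transposition.transpose_def)
  with \<open>a \<noteq> b\<close> have "alternant n y \<mu> = - alternant n y \<mu>"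
    by (metis alternant_permute sign_swap_id of_int_minus of_int_1 mult_minus1)
  then show ?thesis
    by simp
qed

lemma prod_alternant_eq_sum_PiE:
  fixes r :: nat
  shows "(\<Prod>k<r. alternant n (y k) \<mu>) =
     (\<Sum>\<sigma> \<in> Pi\<^sub>E {..<r} (\<lambda>_. {p. p permutes {..<n}}).
        (\<Prod>k<r. of_int (sign (\<sigma> k))) * (\<Prod>i<n. (\<Prod>k<r. y k (\<sigma> k i)) ^ \<mu> i))"
proof -
  have "(\<Prod>k<r. alternant n (y k) \<mu>) = (\<Sum>\<sigma> \<in> Pi\<^sub>E {..<r} (\<lambda>_. {p. p permutes {..<n}}).
          \<Prod>k<r. of_int (sign (\<sigma> k)) * (\<Prod>i<n. y k (\<sigma> k i) ^ \<mu> i))"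
    unfolding alternant_def by (rule prod_sum_PiE) (auto simp: finite_permutations)
  also have "\<dots> = (\<Sum>\<sigma> \<in> Pi\<^sub>E {..<r} (\<lambda>_. {p. p permutes {..<n}}).
          (\<Prod>k<r. of_int (sign (\<sigma> k))) * (\<Prod>i<n. (\<Prod>k<r. y k (\<sigma> k i)) ^ \<mu> i))"
  proof (intro sum.cong refl)
    fix \<sigma> :: "nat \<Rightarrow> nat \<Rightarrow> nat"
    have "(\<Prod>k<r. \<Prod>i<n. y k (\<sigma> k i) ^ \<mu> i) = (\<Prod>i<n. (\<Prod>k<r. y k (\<sigma> k i)) ^ \<mu> i)"
      by (subst prod.swap) (simp add: prod_power_distrib)
    then show "(\<Prod>k<r. of_int (sign (\<sigma> k)) * (\<Prod>i<n. y k (\<sigma> k i) ^ \<mu> i)) =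
        (\<Prod>k<r. of_int (sign (\<sigma> k))) * (\<Prod>i<n. (\<Prod>k<r. y k (\<sigma> k i)) ^ \<mu> i)"
      by (simp add: prod.distrib)
  qed
  finally show ?thesis .
qed

lemma has_sum_prod_alternant:
  fixes x :: "nat \<Rightarrow> nat \<Rightarrow> complex"
  assumes "r > 0" and "\<And>k j. k < r \<Longrightarrow> j < n \<Longrightarrow> norm (x k j) < 1"
  shows "((\<lambda>\<mu>. \<Prod>k<r. alternant n (x k) \<mu>) has_sum
           (fact n * hyperdet r n (\<lambda>idx. 1 / (1 - (\<Prod>k<r. x k (idx k))))))
         (PiE {..<n} (\<lambda>_. UNIV))"
proof -
  let ?S = "Pi\<^sub>E {..<r} (\<lambda>_. {p. p permutes {..<n}})"
  have hyperdet_eq: "fact n * hyperdet r n A =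
      (\<Sum>\<sigma>\<in>?S. (\<Prod>k<r. of_int (sign (\<sigma> k))) * (\<Prod>i<n. A (\<lambda>k. \<sigma> k i)))" for A
    unfolding hyperdet_def by (simp only: mult.assoc[symmetric]) simp
  have "((\<lambda>\<mu>. \<Sum>\<sigma>\<in>?S. (\<Prod>k<r. of_int (sign (\<sigma> k))) * (\<Prod>i<n. (\<Prod>k<r. x k (\<sigma> k i)) ^ \<mu> i))
      has_sum (\<Sum>\<sigma>\<in>?S. (\<Prod>k<r. of_int (sign (\<sigma> k))) * (\<Prod>i<n. 1 / (1 - (\<Prod>k<r. x k (\<sigma> k i))))))
      (PiE {..<n} (\<lambda>_. UNIV))"
  proof (intro has_sum_sum has_sum_cmult_right has_sum_prod_geometric_PiE)
    fix \<sigma> i assume "\<sigma> \<in> ?S" and "i \<in> {..<n}"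
    then have "\<sigma> k i < n" if "k < r" for k
      using that permutes_in_image[of "\<sigma> k" "{..<n}" i] by (auto simp: PiE_iff)
    with \<open>r > 0\<close> show "norm (\<Prod>k<r. x k (\<sigma> k i)) < 1"
      by (intro norm_prod_less_one assms(2)) auto
  qed (auto simp: finite_permutations finite_PiE)
  then show ?thesis
    by (simp only: prod_alternant_eq_sum_PiE hyperdet_eq)
qed

lemma prod_alternant_permute_even:
  fixes y :: "nat \<Rightarrow> nat \<Rightarrow> 'a::comm_ring_1"
  assumes "even r" and "\<tau> permutes {..<n}"
  shows "(\<Prod>k<r. alternant n (y k) (\<mu> \<circ> \<tau>)) = (\<Prod>k<r. alternant n (y k) \<mu>)"
proof -
  have "(of_int (sign \<tau>) :: 'a) ^ r = 1"
    using assms(1) by (auto simp: sign_def)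
  then show ?thesis
    using assms(2) by (simp add: alternant_permute prod.distrib)
qed

section \<open>Symmetric sums over strictly decreasing tuples\<close>

definition strictly_decreasing_tuples :: "nat \<Rightarrow> (nat \<Rightarrow> 'a::linorder) set" where
  "strictly_decreasing_tuples n = {\<nu> \<in> PiE {..<n} (\<lambda>_. UNIV). strict_antimono_on {..<n} \<nu>}"

lemma strict_antimono_on_lessThan_eqI:
  fixes \<nu> \<nu>' :: "nat \<Rightarrow> 'a::linorder"
  assumes "strict_antimono_on {..<n} \<nu>" and "strict_antimono_on {..<n} \<nu>'"
    and "\<nu> ` {..<n} = \<nu>' ` {..<n}" and "j < n"
  shows "\<nu> j = \<nu>' j"
proof -
  have sorted: "sorted_wrt (<) (map f (rev [0..<n]))"
    if "strict_antimono_on {..<n} f" for f :: "nat \<Rightarrow> 'a"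
    using that unfolding sorted_wrt_map sorted_wrt_rev
    by (auto simp: sorted_wrt_iff_nth_less monotone_on_def)
  have "map \<nu> (rev [0..<n]) = map \<nu>' (rev [0..<n])"
    by (rule strict_sorted_equal) (use assms sorted in \<open>auto simp: atLeast0LessThan\<close>)
  then show ?thesis
    using assms(4) by (simp add: map_eq_conv)
qed

lemma obtain_strictly_decreasing_same_image:
  fixes \<mu> :: "nat \<Rightarrow> 'a::linorder"
  assumes "inj_on \<mu> {..<n}"
  obtains \<nu> where "\<nu> \<in> strictly_decreasing_tuples n" and "\<nu> ` {..<n} = \<mu> ` {..<n}"
proof
  define L where "L = rev (sorted_list_of_set (\<mu> ` {..<n}))"
  have "length L = n"
    using card_image[OF assms] by (simp add: L_def)
  moreover have "sorted_wrt (>) L"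
    by (simp add: L_def sorted_wrt_rev)
  ultimately show "restrict (\<lambda>j. L ! j) {..<n} \<in> strictly_decreasing_tuples n"
    by (auto simp: strictly_decreasing_tuples_def monotone_on_def sorted_wrt_iff_nth_less)
  have "restrict (\<lambda>j. L ! j) {..<n} ` {..<n} = set L"
    using \<open>length L = n\<close> by (auto simp: in_set_conv_nth)
  then show "restrict (\<lambda>j. L ! j) {..<n} ` {..<n} = \<mu> ` {..<n}"
    by (simp add: L_def)
qed

lemma inj_on_lessThan_obtain_sorted:
  fixes \<mu> :: "nat \<Rightarrow> 'a::linorder"
  assumes "\<mu> \<in> PiE {..<n} (\<lambda>_. UNIV)" and "inj_on \<mu> {..<n}"
  obtains \<nu> \<tau> where "\<nu> \<in> strictly_decreasing_tuples n" and "\<tau> permutes {..<n}" and "\<mu> = \<nu> \<circ> \<tau>"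
proof -
  obtain \<nu> where \<nu>_dec: "\<nu> \<in> strictly_decreasing_tuples n" and \<nu>_image: "\<nu> ` {..<n} = \<mu> ` {..<n}"
    using obtain_strictly_decreasing_same_image[OF assms(2)] .
  have "inj_on \<nu> {..<n}"
    using \<nu>_dec by (simp add: strictly_decreasing_tuples_def strict_antimono_iff_antimono)
  with \<nu>_image have \<nu>_bij: "bij_betw \<nu> {..<n} (\<mu> ` {..<n})"
    by (simp add: bij_betw_def)
  define \<tau> where "\<tau> j = (if j < n then the_inv_into {..<n} \<nu> (\<mu> j) else j)" for j
  have "bij_betw (the_inv_into {..<n} \<nu> \<circ> \<mu>) {..<n} {..<n}"
    using inj_on_imp_bij_betw[OF assms(2)] bij_betw_the_inv_into[OF \<nu>_bij]
    by (rule bij_betw_trans)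
  then have "bij_betw \<tau> {..<n} {..<n}"
    by (rule bij_betw_cong[THEN iffD1, rotated]) (simp add: \<tau>_def)
  then have \<tau>_perm: "\<tau> permutes {..<n}"
    by (rule bij_imp_permutes) (simp add: \<tau>_def)
  have "\<mu> = \<nu> \<circ> \<tau>"
  proof
    fix j
    show "\<mu> j = (\<nu> \<circ> \<tau>) j"
    proof (cases "j < n")
      case True
      then have "(\<nu> \<circ> \<tau>) j = \<nu> (the_inv_into {..<n} \<nu> (\<mu> j))"
        by (simp add: \<tau>_def)
      also have "\<dots> = \<mu> j"
        using True by (intro f_the_inv_into_f_bij_betw[OF \<nu>_bij]) simp
      finally show ?thesis
        by (rule sym)
    next
      case False
      have "\<nu> \<in> PiE {..<n} (\<lambda>_. UNIV)"
        using \<nu>_dec by (simp add: strictly_decreasing_tuples_def)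
      then have "\<nu> j = undefined"
        by (rule PiE_arb) (simp add: False)
      moreover have "\<mu> j = undefined"
        using assms(1) by (rule PiE_arb) (simp add: False)
      ultimately show ?thesis
        using False by (simp add: \<tau>_def)
    qed
  qed
  with \<nu>_dec \<tau>_perm show ?thesis
    by (rule that)
qed

lemma comp_permutes_strictly_decreasing_eqD:
  fixes \<nu> \<nu>' :: "nat \<Rightarrow> 'a::linorder"
  assumes \<tau>: "\<tau> permutes {..<n}" and \<tau>': "\<tau>' permutes {..<n}"
    and \<nu>: "\<nu> \<in> strictly_decreasing_tuples n" and \<nu>': "\<nu>' \<in> strictly_decreasing_tuples n"
    and eq: "\<nu> \<circ> \<tau> = \<nu>' \<circ> \<tau>'"
  shows "\<tau> = \<tau>'" and "\<nu> = \<nu>'"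
proof -
  have "\<nu> ` {..<n} = \<nu> ` \<tau> ` {..<n}"
    by (simp only: permutes_image[OF \<tau>])
  also have "\<dots> = \<nu>' ` \<tau>' ` {..<n}"
    by (simp only: image_comp eq)
  also have "\<dots> = \<nu>' ` {..<n}"
    by (simp only: permutes_image[OF \<tau>'])
  finally have "\<nu> j = \<nu>' j" if "j < n" for j
    using \<nu> \<nu>' that
    by (intro strict_antimono_on_lessThan_eqI) (auto simp: strictly_decreasing_tuples_def)
  then show "\<nu> = \<nu>'"
    using \<nu> \<nu>'
    by (intro PiE_ext[of _ "{..<n}" "\<lambda>_. UNIV"]) (auto simp: strictly_decreasing_tuples_def)
  show "\<tau> = \<tau>'"
  proof
    fix j
    show "\<tau> j = \<tau>' j"
    proof (cases "j < n")
      case True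
      have "inj_on \<nu> {..<n}"
        using \<nu> by (simp add: strictly_decreasing_tuples_def strict_antimono_iff_antimono)
      moreover have "\<nu> (\<tau> j) = \<nu> (\<tau>' j)"
        using fun_cong[OF eq, of j] \<open>\<nu> = \<nu>'\<close> by simp
      ultimately show ?thesis
        using True permutes_in_image[OF \<tau>] permutes_in_image[OF \<tau>'] by (auto dest: inj_onD)
    next
      case False
      then show ?thesis
        using permutes_not_in[OF \<tau>] permutes_not_in[OF \<tau>'] by simp
    qed
  qed
qed

lemma bij_betw_compose_strictly_decreasing:
  "bij_betw (\<lambda>(\<tau>, \<nu>). \<nu> \<circ> \<tau>) ({\<tau>. \<tau> permutes {..<n}} \<times> strictly_decreasing_tuples n)
     {\<mu> \<in> PiE {..<n} (\<lambda>_. UNIV :: 'a::linorder set). inj_on \<mu> {..<n}}"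
  (is "bij_betw ?h ?A ?B")
proof (rule bij_betw_imageI)
  show "inj_on ?h ?A"
    by (rule inj_onI) (auto dest: comp_permutes_strictly_decreasing_eqD)
  show "?h ` ?A = ?B"
  proof (intro equalityI subsetI)
    fix \<mu>
    assume "\<mu> \<in> ?h ` ?A"
    then obtain \<tau> \<nu> where \<tau>: "\<tau> permutes {..<n}" and \<nu>: "\<nu> \<in> strictly_decreasing_tuples n"
      and \<mu>: "\<mu> = \<nu> \<circ> \<tau>"
      by auto
    have "inj_on \<nu> (\<tau> ` {..<n})"
      using \<tau> \<nu>
      by (simp add: permutes_image strictly_decreasing_tuples_def strict_antimono_iff_antimono)
    with \<tau> have "inj_on (\<nu> \<circ> \<tau>) {..<n}"
      by (blast intro: comp_inj_on permutes_inj_on)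
    moreover have "\<nu> \<circ> \<tau> \<in> PiE {..<n} (\<lambda>_. UNIV)"
      using \<nu> permutes_in_image[OF \<tau>] permutes_not_in[OF \<tau>]
      by (auto simp: strictly_decreasing_tuples_def PiE_def extensional_def)
    ultimately show "\<mu> \<in> ?B"
      by (simp add: \<mu>)
  next
    fix \<mu>
    assume "\<mu> \<in> ?B"
    then obtain \<nu> \<tau> where "\<nu> \<in> strictly_decreasing_tuples n" "\<tau> permutes {..<n}" "\<mu> = \<nu> \<circ> \<tau>"
      using inj_on_lessThan_obtain_sorted by blast
    then show "\<mu> \<in> ?h ` ?A"
      by (intro image_eqI[of _ _ "(\<tau>, \<nu>)"]) auto
  qed
qed

lemma has_sum_symmetric_strictly_decreasing:
  fixes F :: "(nat \<Rightarrow> 'b::linorder) \<Rightarrow> 'a::{banach,real_normed_field}"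
  assumes sum: "(F has_sum s) (PiE {..<n} (\<lambda>_. UNIV))"
    and vanish: "\<And>\<mu>. \<mu> \<in> PiE {..<n} (\<lambda>_. UNIV) \<Longrightarrow> \<not> inj_on \<mu> {..<n} \<Longrightarrow> F \<mu> = 0"
    and symmetric: "\<And>\<mu> \<tau>. \<mu> \<in> PiE {..<n} (\<lambda>_. UNIV) \<Longrightarrow> \<tau> permutes {..<n} \<Longrightarrow> F (\<mu> \<circ> \<tau>) = F \<mu>"
  shows "(F has_sum (s / fact n)) (strictly_decreasing_tuples n)"
proof -
  let ?P = "{\<tau>. \<tau> permutes {..<n}}" and ?D = "strictly_decreasing_tuples n :: (nat \<Rightarrow> 'b) set"
  have "(F has_sum s) {\<mu> \<in> PiE {..<n} (\<lambda>_. UNIV). inj_on \<mu> {..<n}} \<longleftrightarrow>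
      (F has_sum s) (PiE {..<n} (\<lambda>_. UNIV))"
    by (rule has_sum_cong_neutral) (auto intro: vanish)
  then have "((\<lambda>(\<tau>, \<nu>). F (\<nu> \<circ> \<tau>)) has_sum s) (?P \<times> ?D)"
    using sum
      has_sum_reindex_bij_betw[OF bij_betw_compose_strictly_decreasing, where f = F and S = s]
    by (simp add: case_prod_beta')
  moreover have "F (\<nu> \<circ> \<tau>) = F \<nu>" if "(\<tau>, \<nu>) \<in> ?P \<times> ?D" for \<tau> \<nu>
    using that by (intro symmetric) (auto simp: strictly_decreasing_tuples_def)
  ultimately have pairs: "((\<lambda>(\<tau>, \<nu>). F \<nu>) has_sum s) (?P \<times> ?D)"
    by (subst has_sum_cong[symmetric]) auto
  have "F summable_on ?D"
    using has_sum_imp_summable[OF sum]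
    by (rule summable_on_subset_banach) (auto simp: strictly_decreasing_tuples_def)
  then have D: "(F has_sum infsum F ?D) ?D"
    by (rule has_sum_infsum)
  have "((\<lambda>\<tau>. infsum F ?D) has_sum s) ?P"
    by (rule has_sum_SigmaD[OF pairs]) (simp add: D)
  moreover have "((\<lambda>\<tau>. infsum F ?D) has_sum (fact n * infsum F ?D)) ?P"
    by (rule has_sum_finiteI) (simp_all add: finite_permutations card_permutations)
  ultimately have "s = fact n * infsum F ?D"
    by (rule has_sum_unique)
  then show ?thesis
    using D by simp
qed

section \<open>Partitions\<close>

definition add_staircase :: "nat \<Rightarrow> (nat \<Rightarrow> nat) \<Rightarrow> nat \<Rightarrow> nat" where
  "add_staircase n lam = restrict (\<lambda>j. lam j + (n - 1 - j)) {..<n}"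

lemma strict_antimono_on_lessThan_gap:
  fixes \<nu> :: "nat \<Rightarrow> nat"
  assumes "strict_antimono_on {..<n} \<nu>" and "i \<le> j" and "j < n"
  shows "\<nu> j + (j - i) \<le> \<nu> i"
  using assms(2,3)
proof (induction j rule: dec_induct)
  case (step j)
  then have "\<nu> (Suc j) < \<nu> j"
    using assms(1) by (simp add: monotone_on_def)
  with step show ?case
    by simp
qed simp

lemma inj_on_add_staircase: "inj_on (add_staircase n) (partitions_le n)"
proof (rule inj_onI, rule ext)
  fix lam lam' j
  assume "lam \<in> partitions_le n" and "lam' \<in> partitions_le n"
    and eq: "add_staircase n lam = add_staircase n lam'"
  have "add_staircase n lam j = add_staircase n lam' j"
    by (simp only: eq)
  with \<open>lam \<in> partitions_le n\<close> \<open>lam' \<in> partitions_le n\<close> show "lam j = lam' j"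
    by (cases "j < n") (simp_all add: add_staircase_def partitions_le_def)
qed

lemma add_staircase_in_strictly_decreasing_tuples:
  assumes "lam \<in> partitions_le n"
  shows "add_staircase n lam \<in> strictly_decreasing_tuples n"
proof -
  have "add_staircase n lam j < add_staircase n lam i" if "i < j" and "j < n" for i j
  proof -
    have "lam j \<le> lam i"
      using assms \<open>i < j\<close> by (simp add: partitions_le_def)
    with that show ?thesis
      by (simp add: add_staircase_def)
  qed
  then show ?thesis
    by (auto simp: strictly_decreasing_tuples_def monotone_on_def add_staircase_def)
qed

lemma strictly_decreasing_tuple_in_add_staircase_image:
  assumes \<nu>: "\<nu> \<in> strictly_decreasing_tuples n"
  shows "\<nu> \<in> add_staircase n ` partitions_le n"
proof -
  have gap: "\<nu> j + (j - i) \<le> \<nu> i" if "i \<le> j" and "j < n" for i j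
    using \<nu> that by (intro strict_antimono_on_lessThan_gap) (simp_all add: strictly_decreasing_tuples_def)
  define lam where "lam j = (if j < n then \<nu> j - (n - 1 - j) else 0)" for j
  have lam: "lam \<in> partitions_le n"
    unfolding partitions_le_def
  proof (intro CollectI conjI allI impI)
    fix i j :: nat
    assume "i \<le> j"
    then show "lam j \<le> lam i"
      using gap[of i j] by (cases "j < n") (simp_all add: lam_def)
  qed (simp add: lam_def)
  have "add_staircase n lam j = \<nu> j" for j
  proof (cases "j < n")
    case True
    then have "\<nu> (n - 1) + (n - 1 - j) \<le> \<nu> j"
      by (intro gap) auto
    then have "n - 1 - j \<le> \<nu> j"
      by (rule add_leD2)
    with True show ?thesis
      by (simp add: add_staircase_def lam_def)
  next
    case False
    have "\<nu> \<in> PiE {..<n} (\<lambda>_. UNIV)"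
      using \<nu> by (simp add: strictly_decreasing_tuples_def)
    then have "\<nu> j = undefined"
      by (rule PiE_arb) (simp add: False)
    with False show ?thesis
      by (simp add: add_staircase_def)
  qed
  with lam show ?thesis
    by (intro image_eqI[of _ _ lam]) auto
qed

lemma bij_betw_add_staircase:
  "bij_betw (add_staircase n) (partitions_le n) (strictly_decreasing_tuples n)"
  using inj_on_add_staircase add_staircase_in_strictly_decreasing_tuples
    strictly_decreasing_tuple_in_add_staircase_image
  by (intro bij_betw_imageI) auto

lemma schur_eq_alternant:
  "schur n y lam = alternant n y (add_staircase n lam) / vandermonde n y"
proof -
  have "alternant n y (\<lambda>j. lam j + (n - 1 - j)) = alternant n y (add_staircase n lam)"
    by (rule alternant_cong) (simp add: add_staircase_def)
  then show ?thesis
    unfolding schur_def det_power_mat_eq_alternant by simp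
qed

theorem corollary3p2:
  fixes m n :: nat and x :: "nat \<Rightarrow> nat \<Rightarrow> complex"
  assumes "m > 0" and "n > 0"
    and "\<And>k j. k < 2 * m \<Longrightarrow> j < n \<Longrightarrow> norm (x k j) < 1"
    and "\<And>k. k < 2 * m \<Longrightarrow> inj_on (x k) {..<n}"
  shows "((\<lambda>lam. \<Prod>k<2 * m. schur n (x k) lam) has_sum
           ((\<Prod>k<2 * m. 1 / vandermonde n (x k)) *
            hyperdet (2 * m) n (\<lambda>idx. 1 / (1 - (\<Prod>k<2 * m. x k (idx k))))))
         (partitions_le n)"
proof -
  define A where "A \<mu> = (\<Prod>k<2 * m. alternant n (x k) \<mu>)" for \<mu>
  define H where "H = hyperdet (2 * m) n (\<lambda>idx. 1 / (1 - (\<Prod>k<2 * m. x k (idx k))))"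
  define C where "C = (\<Prod>k<2 * m. 1 / vandermonde n (x k))"
  have "(A has_sum (fact n * H)) (PiE {..<n} (\<lambda>_. UNIV))"
    unfolding A_def H_def using assms(1,3) by (intro has_sum_prod_alternant) auto
  then have "(A has_sum (fact n * H / fact n)) (strictly_decreasing_tuples n)"
  proof (rule has_sum_symmetric_strictly_decreasing)
    show "A \<mu> = 0" if "\<not> inj_on \<mu> {..<n}" for \<mu>
      unfolding A_def using assms(1) alternant_eq_0_if_not_inj[OF that]
      by (intro prod_zero) (auto intro!: bexI[of _ 0])
    show "A (\<mu> \<circ> \<tau>) = A \<mu>" if "\<tau> permutes {..<n}" for \<mu> \<tau>
      unfolding A_def using that by (intro prod_alternant_permute_even) auto
  qed
  then have "((\<lambda>lam. A (add_staircase n lam)) has_sum H) (partitions_le n)"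
    by (simp add: has_sum_reindex_bij_betw[OF bij_betw_add_staircase])
  then have "((\<lambda>lam. C * A (add_staircase n lam)) has_sum (C * H)) (partitions_le n)"
    by (rule has_sum_cmult_right)
  moreover have "(\<Prod>k<2 * m. schur n (x k) lam) = C * A (add_staircase n lam)" for lam
    by (simp add: schur_eq_alternant A_def C_def prod.distrib[symmetric])
  ultimately show ?thesis
    by (simp add: C_def H_def)
qed

end
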